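(* For every positive integer $n$, the number \[ a_n:=\frac{1}{8n^2\binom{2n}{n}^2}\sum_{k=0}^{n-1}(-1)^{n-1-k}\binom{2k}{k}^5(205k^2+160k+32) \] is a positive integer. *)

theory Defs
  imports Main "HOL.Rat"
begin

definition a_seq :: "nat \<Rightarrow> rat" where
  "a_seq n = (\<Sum>k<n. (-1) ^ (n - 1 - k) * of_nat ((2*k) choose k) ^ 5
                 * of_nat (205*k^2 + 160*k + 32))
             / (8 * of_nat n ^ 2 * of_nat ((2*n) choose n) ^ 2)"

end

theory Submission
  imports Defs
begin

(*
  Put u(n,k) = C(2n+1,k) C(n+k,k)^2, c(n) = ((2n+1) C(2n,n))^2 and
  T(k) = C(2k,k)^5 (205k^2 + 160k + 32) (binom_term, wz_scale and series_term below).
  The denominator of a(n+1) is 32 c(n), and the heart of the matter is the identity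

    sum_{k<=n} (-1)^k T(k) = 32 c(n) sum_{k<=n} (-1)^k u(n,k),

  which exhibits a(n+1) = (-1)^n sum_{k<=n} (-1)^k u(n,k) as an integer. It is proved by the
  WZ method: F(n,k) = (-1)^k c(n) u(n,k) and G = F R, for an explicit rational certificate R,
  satisfy F(n+1,k) - F(n,k) = G(n+1,k) - G(n+1,k-1), so the difference of consecutive right-hand
  sides telescopes to a boundary term equal to (-1)^(n+1) T(n+1) / 32. Positivity holds because
  T is strictly increasing, so the alternating sum sum_{k<=n} (-1)^(n-k) T(k) lies in (0, T(n)].
*)

lemma alternating_sum_of_increasing_bounds:
  fixes f :: "nat \<Rightarrow> 'a::linordered_idom"
  assumes "0 < f 0" and "\<And>k. f k < f (Suc k)"
  shows "0 < (\<Sum>k\<le>n. (-1)^(n-k) * f k) \<and> (\<Sum>k\<le>n. (-1)^(n-k) * f k) \<le> f n"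
proof (induction n)
  case 0
  show ?case using assms(1) by simp
next
  case (Suc n)
  have "(\<Sum>k\<le>n. (-1)^(Suc n - k) * f k) = - (\<Sum>k\<le>n. (-1)^(n-k) * f k)"
    by (simp add: sum_negf[symmetric] Suc_diff_le)
  then have "(\<Sum>k\<le>Suc n. (-1)^(Suc n - k) * f k) = f (Suc n) - (\<Sum>k\<le>n. (-1)^(n-k) * f k)"
    by simp
  then show ?case
    using Suc.IH assms(2)[of n] by linarith
qed

lemma binomial_odd_central: "2 * (2*n+1 choose (n+1)) = 2*(n+1) choose (n+1)"
proof -
  have "2*n+1 choose n = 2*n+1 choose (n+1)"
    using binomial_symmetric[of n "2*n+1"] by simp
  moreover have "2*(n+1) choose (n+1) = (2*n+1 choose n) + (2*n+1 choose (n+1))"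
    using binomial_Suc_Suc[of "2*n+1" n] by simp
  ultimately show ?thesis by simp
qed

lemma central_binomial_Suc: "(n+1) * (2*(n+1) choose (n+1)) = 2 * (2*n+1) * (2*n choose n)"
proof -
  have "(n+1) * (2*n+1 choose (n+1)) = (2*n+1) * (2*n choose n)"
    using Suc_times_binomial[of n "2*n"] by simp
  then show ?thesis
    unfolding binomial_odd_central[symmetric] by (simp only: mult.left_commute mult.assoc)
qed

lemma of_nat_central_binomial_Suc:
  "(of_nat n + 1) * of_nat (2*(n+1) choose (n+1))
     = (2 * (2 * of_nat n + 1) * of_nat (2*n choose n) :: 'a::comm_semiring_1)"
proof -
  have "of_nat ((n+1) * (2*(n+1) choose (n+1))) = (of_nat (2 * (2*n+1) * (2*n choose n)) :: 'a)"
    by (simp only: central_binomial_Suc)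
  then show ?thesis by (simp only: of_nat_mult of_nat_add of_nat_1 of_nat_numeral)
qed

definition binom_term :: "nat \<Rightarrow> nat \<Rightarrow> nat" where
  "binom_term n k = (2*n+1 choose k) * (n+k choose k)^2"

lemma binom_term_Suc_right:
  "binom_term n (Suc k) * (Suc k)^3 = binom_term n k * (2*n+1-k) * (n+k+1)^2"
proof -
  have lower: "(2*n+1 choose Suc k) * Suc k = (2*n+1 choose k) * (2*n+1-k)"
    using binomial_absorption[of k "2*n+1"] binomial_absorb_comp[of "2*n+1" k]
    by (simp add: mult.commute)
  have diagonal: "(n + Suc k choose Suc k) * Suc k = (n+k+1) * (n+k choose k)"
    using Suc_times_binomial[of k "n+k"] by (simp add: mult.commute)
  have "binom_term n (Suc k) * (Suc k)^3
      = ((2*n+1 choose Suc k) * Suc k) * ((n + Suc k choose Suc k) * Suc k)^2"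
    unfolding binom_term_def by (simp only: power2_eq_square power3_eq_cube mult_ac)
  also have "\<dots> = ((2*n+1 choose k) * (2*n+1-k)) * ((n+k+1) * (n+k choose k))^2"
    by (simp only: lower diagonal)
  also have "\<dots> = binom_term n k * (2*n+1-k) * (n+k+1)^2"
    unfolding binom_term_def by (simp only: power2_eq_square mult_ac)
  finally show ?thesis .
qed

lemma binom_term_Suc_left:
  "binom_term n (Suc k) * ((2*n+3) * (2*n+2) * (n+k+2)^2)
     = binom_term (Suc n) (Suc k) * ((2*n+2-k) * (2*n+1-k) * (n+1)^2)"
proof -
  have upper3: "(2*n+2-k) * (2*n+3 choose Suc k) = (2*n+3) * (2*n+2 choose Suc k)"
    using binomial_absorb_comp[of "2*n+3" "Suc k"] by simp
  have upper2: "(2*n+1-k) * (2*n+2 choose Suc k) = (2*n+2) * (2*n+1 choose Suc k)"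
    using binomial_absorb_comp[of "2*n+2" "Suc k"] by simp
  have diagonal: "(n+1) * (Suc n + Suc k choose Suc k) = (n+k+2) * (n + Suc k choose Suc k)"
    using binomial_absorb_comp[of "n+k+2" "Suc k"] by simp
  have odd_Suc: "2 * Suc n + 1 = 2*n+3" by simp
  have "binom_term (Suc n) (Suc k) * ((2*n+2-k) * (2*n+1-k) * (n+1)^2)
      = (2*n+1-k) * ((2*n+2-k) * (2*n+3 choose Suc k))
        * ((n+1) * (Suc n + Suc k choose Suc k))^2"
    unfolding binom_term_def odd_Suc by (simp only: power2_eq_square mult_ac)
  also have "\<dots> = (2*n+3) * ((2*n+1-k) * (2*n+2 choose Suc k))
        * ((n+k+2) * (n + Suc k choose Suc k))^2"
    by (simp only: upper3 diagonal mult.left_commute)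
  also have "\<dots> = binom_term n (Suc k) * ((2*n+3) * (2*n+2) * (n+k+2)^2)"
    unfolding upper2 binom_term_def by (simp only: power2_eq_square mult_ac)
  finally show ?thesis ..
qed

definition wz_num :: "'a::comm_ring_1 \<Rightarrow> 'a \<Rightarrow> 'a" where
  "wz_num m k = 8 - 8*k^2 + 48*m + 5*m*k - 21*m*k^2 + 94*m^2 + 12*m^2*k + 60*m^3"

(*
  The WZ relation at (n+1, k+1), divided by the common factors and expressed through term ratios:
  N = n, J = k, U0 = u(n+1,k), U1 = u(n+1,k+1), V = u(n,k+1), C0 = c(n), C1 = c(n+1).
*)
lemma wz_ratio_identity:
  fixes N J U0 U1 V C0 C1 :: "'a::linordered_field"
  assumes "0 \<le> N" "0 \<le> J"
    and U1: "U1 * (J+1)^3 = U0 * (2*N+3-J) * (N+J+2)^2"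
    and V: "V * ((2*N+3) * (2*N+2) * (N+J+2)^2) = U1 * ((2*N+2-J) * (2*N+1-J) * (N+1)^2)"
    and C1: "C1 * (N+1)^2 = 4 * (2*N+3)^2 * C0"
  shows "C1*U1 - C0*V = C1 * (U1 * wz_num (N+1) (J+1) + U0 * wz_num (N+1) J) / (8*(2*N+3)^3)"
proof -
  define D where "D = (2*N+2) * (N+J+2)^2 * (J+1)^3"
  have "D \<noteq> 0" "2*N+3 \<noteq> 0"
    unfolding D_def using \<open>0 \<le> N\<close> \<open>0 \<le> J\<close> by (simp_all add: add_nonneg_pos)
  moreover have "8*(2*N+3)^3 * (C1*U1 - C0*V) * D
      = C1 * (U1 * wz_num (N+1) (J+1) + U0 * wz_num (N+1) J) * D"
    using U1 V C1 unfolding D_def wz_num_def by algebra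
  ultimately show ?thesis
    by (simp add: eq_divide_eq mult.commute)
qed

lemma wz_ratio_identity_zero:
  fixes N C0 C1 :: "'a::linordered_field"
  assumes "0 \<le> N" and C1: "C1 * (N+1)^2 = 4 * (2*N+3)^2 * C0"
  shows "C1 - C0 = C1 * wz_num (N+1) 0 / (8*(2*N+3)^3)"
proof -
  have "(N+1)^2 \<noteq> 0" "2*N+3 \<noteq> 0"
    using \<open>0 \<le> N\<close> by (simp_all add: add_nonneg_pos)
  moreover have "8*(2*N+3)^3 * (C1 - C0) * (N+1)^2 = C1 * wz_num (N+1) 0 * (N+1)^2"
    using C1 unfolding wz_num_def
    by (simp only: power_zero_numeral mult_zero_right mult_zero_left diff_zero add_0_right) algebra
  ultimately show ?thesis
    by (simp add: eq_divide_eq mult.commute)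
qed

(* N = n, X = C(2n+2,n+1), B = C(2n+1,n+1), C = C(2n,n), Y = C(2n+3,n+1). *)
lemma wz_boundary_identity:
  fixes N B C X Y :: "'a::linordered_field"
  assumes "0 \<le> N"
    and C: "(N+1) * X = 2 * (2*N+1) * C" and B: "2 * B = X" and Y: "(N+2) * Y = (2*N+3) * X"
  shows "((2*N+1) * C)^2 * B^3 + ((2*N+3) * X)^2 * (Y * X^2) * wz_num (N+1) (N+1) / (8*(2*N+3)^3)
       = X^5 * (205*(N+1)^2 + 160*(N+1) + 32) / 32"
proof -
  define d where "d = 8*(2*N+3)^3"
  have "N+2 \<noteq> 0" "d \<noteq> 0"
    unfolding d_def using \<open>0 \<le> N\<close> by (simp_all add: add_nonneg_pos)
  moreover have
    "(((2*N+1) * C)^2 * B^3 * d + ((2*N+3) * X)^2 * (Y * X^2) * wz_num (N+1) (N+1)) * 32 * (N+2)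
       = X^5 * (205*(N+1)^2 + 160*(N+1) + 32) * d * (N+2)"
    using C B Y unfolding d_def wz_num_def by algebra
  ultimately show ?thesis
    unfolding d_def[symmetric] by (simp add: add_divide_eq_iff frac_eq_eq)
qed

definition wz_scale :: "nat \<Rightarrow> rat" where
  "wz_scale n = of_nat ((2*n+1) * (2*n choose n))^2"

definition wz_F :: "nat \<Rightarrow> nat \<Rightarrow> rat" where
  "wz_F n k = (-1)^k * wz_scale n * of_nat (binom_term n k)"

definition wz_G :: "nat \<Rightarrow> nat \<Rightarrow> rat" where
  "wz_G n k = wz_F n k * wz_num (of_nat n) (of_nat k) / (8 * (2 * of_nat n + 1)^3)"

lemma wz_scale_pos: "0 < wz_scale n"
proof -
  have "0 < (2*n+1) * (2*n choose n)" by simp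
  then show ?thesis unfolding wz_scale_def by (simp only: of_nat_0_less_iff zero_less_power)
qed

lemma wz_scale_Suc: "wz_scale (Suc n) * (of_nat n + 1)^2 = 4 * (2 * of_nat n + 3)^2 * wz_scale n"
proof -
  have "2 * (n+1) + 1 = 2*n+3" by simp
  then have "wz_scale (Suc n) = ((2 * of_nat n + 3) * of_nat (2*(n+1) choose (n+1)))^2"
    unfolding wz_scale_def Suc_eq_plus1 by (simp add: algebra_simps del: binomial_Suc_Suc)
  moreover have "wz_scale n = ((2 * of_nat n + 1) * of_nat (2*n choose n))^2"
    unfolding wz_scale_def by (simp add: algebra_simps)
  ultimately show ?thesis
    using of_nat_central_binomial_Suc[of n, where 'a=rat] by algebra
qed

lemma wz_G_Suc:
  "wz_G (Suc n) k = wz_F (Suc n) k * wz_num (of_nat n + 1) (of_nat k) / (8 * (2 * of_nat n + 3)^3)"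
  unfolding wz_G_def by (simp add: algebra_simps)

lemma wz_equation_zero: "wz_F (Suc n) 0 - wz_F n 0 = wz_G (Suc n) 0"
  using wz_ratio_identity_zero[OF _ wz_scale_Suc[of n]]
  by (simp add: wz_G_Suc wz_F_def binom_term_def)

lemma wz_equation:
  assumes "k \<le> n"
  shows "wz_F (Suc n) (Suc k) - wz_F n (Suc k) = wz_G (Suc n) (Suc k) - wz_G (Suc n) k"
proof -
  define N J :: rat where "N = of_nat n" and "J = of_nat k"
  define U0 U1 V :: rat
    where "U0 = of_nat (binom_term (Suc n) k)" and "U1 = of_nat (binom_term (Suc n) (Suc k))"
      and "V = of_nat (binom_term n (Suc k))"
  have casts: "of_nat (Suc k) = J+1" "of_nat (2 * Suc n + 1 - k) = 2*N+3-J"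
    "of_nat (Suc n + k + 1) = N+J+2" "of_nat (2*n+3) = 2*N+3" "of_nat (2*n+2) = 2*N+2"
    "of_nat (n+k+2) = N+J+2" "of_nat (2*n+2-k) = 2*N+2-J" "of_nat (2*n+1-k) = 2*N+1-J"
    "of_nat (n+1) = N+1"
    unfolding N_def J_def using assms by (simp_all add: of_nat_diff)
  have "of_nat (binom_term (Suc n) (Suc k) * (Suc k)^3)
      = (of_nat (binom_term (Suc n) k * (2 * Suc n + 1 - k) * (Suc n + k + 1)^2) :: rat)"
    by (simp only: binom_term_Suc_right)
  then have U1: "U1 * (J+1)^3 = U0 * (2*N+3-J) * (N+J+2)^2"
    unfolding of_nat_mult of_nat_power casts U0_def[symmetric] U1_def[symmetric] .
  have "of_nat (binom_term n (Suc k) * ((2*n+3) * (2*n+2) * (n+k+2)^2))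
      = (of_nat (binom_term (Suc n) (Suc k) * ((2*n+2-k) * (2*n+1-k) * (n+1)^2)) :: rat)"
    by (simp only: binom_term_Suc_left)
  then have V: "V * ((2*N+3) * (2*N+2) * (N+J+2)^2) = U1 * ((2*N+2-J) * (2*N+1-J) * (N+1)^2)"
    unfolding of_nat_mult of_nat_power casts U1_def[symmetric] V_def[symmetric] .
  have "wz_F (Suc n) (Suc k) - wz_F n (Suc k)
      = (-1)^Suc k * (wz_scale (Suc n) * U1 - wz_scale n * V)"
    unfolding wz_F_def U1_def V_def by (simp add: algebra_simps)
  also have "\<dots> = (-1)^Suc k * (wz_scale (Suc n) * (U1 * wz_num (N+1) (J+1) + U0 * wz_num (N+1) J)
      / (8*(2*N+3)^3))"
    using wz_ratio_identity[OF _ _ U1 V] wz_scale_Suc[of n] unfolding N_def J_def by simp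
  also have "\<dots> = wz_G (Suc n) (Suc k) - wz_G (Suc n) k"
    unfolding wz_G_Suc wz_F_def casts(1) N_def[symmetric] J_def[symmetric]
      U0_def[symmetric] U1_def[symmetric]
    by (simp add: add_divide_distrib diff_divide_distrib algebra_simps)
  finally show ?thesis .
qed

lemma wz_telescope:
  "K \<le> Suc n \<Longrightarrow> (\<Sum>k\<le>K. wz_F (Suc n) k - wz_F n k) = wz_G (Suc n) K"
proof (induction K)
  case 0
  show ?case using wz_equation_zero by simp
next
  case (Suc K)
  then show ?case using wz_equation[of K n] by simp
qed

definition series_term :: "nat \<Rightarrow> rat" where
  "series_term k = of_nat ((2*k) choose k)^5 * of_nat (205*k^2 + 160*k + 32)"

lemma wz_boundary: "wz_F n (Suc n) + wz_G (Suc n) (Suc n) = (-1)^Suc n * series_term (Suc n) / 32"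
proof -
  define N X B C Y :: rat
    where "N = of_nat n" and "X = of_nat (2*(n+1) choose (n+1))"
      and "B = of_nat (2*n+1 choose (n+1))" and "C = of_nat (2*n choose n)" and "Y = of_nat (2*n+3 choose (n+1))"
  have central: "(N+1) * X = 2 * (2*N+1) * C"
    unfolding N_def X_def C_def by (rule of_nat_central_binomial_Suc)
  have "of_nat (2 * (2*n+1 choose (n+1))) = (of_nat (2*(n+1) choose (n+1)) :: rat)"
    by (simp only: binomial_odd_central)
  then have odd: "2 * B = X"
    unfolding B_def X_def by (simp only: of_nat_mult of_nat_numeral)
  have "(n+2) * (2*n+3 choose (n+1)) = (2*n+3) * (2*(n+1) choose (n+1))"
    using binomial_absorb_comp[of "2*n+3" "n+1"] by (simp del: binomial_Suc_Suc)
  then have "of_nat ((n+2) * (2*n+3 choose (n+1))) = (of_nat ((2*n+3) * (2*(n+1) choose (n+1))) :: rat)"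
    by (rule arg_cong)
  then have upper: "(N+2) * Y = (2*N+3) * X"
    unfolding N_def X_def Y_def by (simp only: of_nat_mult of_nat_add of_nat_numeral)
  have indices: "n + (n+1) = 2*n+1" "n+1 + (n+1) = 2*(n+1)" "2*(n+1)+1 = 2*n+3"
    by simp_all
  have F_diagonal: "wz_F n (Suc n) = (-1)^Suc n * (((2*N+1) * C)^2 * B^3)"
    unfolding wz_F_def wz_scale_def binom_term_def N_def B_def C_def Suc_eq_plus1 indices
    by (simp only: of_nat_mult of_nat_power of_nat_add of_nat_numeral of_nat_1
        power2_eq_square power3_eq_cube mult_ac)
  have "wz_F (Suc n) (Suc n) = (-1)^Suc n * (((2*N+3) * X)^2 * (Y * X^2))"
    unfolding wz_F_def wz_scale_def binom_term_def N_def X_def Y_def Suc_eq_plus1 indices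
    by (simp only: of_nat_mult of_nat_power of_nat_add of_nat_numeral of_nat_1 mult_ac)
  then have G_diagonal: "wz_G (Suc n) (Suc n)
      = (-1)^Suc n * (((2*N+3) * X)^2 * (Y * X^2) * wz_num (N+1) (N+1) / (8*(2*N+3)^3))"
    unfolding wz_G_Suc N_def by (simp add: add.commute)
  have series_term: "series_term (Suc n) = X^5 * (205*(N+1)^2 + 160*(N+1) + 32)"
    unfolding series_term_def N_def X_def Suc_eq_plus1
    by (simp only: of_nat_mult of_nat_power of_nat_add of_nat_numeral of_nat_1)
  have "0 \<le> N"
    unfolding N_def by simp
  show ?thesis
    unfolding F_diagonal G_diagonal series_term distrib_left[symmetric]
      wz_boundary_identity[OF \<open>0 \<le> N\<close> central odd upper]
    by simp
qed

(*
  The sums stop at k = n although u(n,k) only vanishes for k > 2n+1; the missing term F(n,n+1)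
  is what combines with the telescoped G(n+1,n+1) into the new series term.
*)
lemma wz_sum_Suc:
  "(\<Sum>k\<le>Suc n. wz_F (Suc n) k) - (\<Sum>k\<le>n. wz_F n k) = (-1)^Suc n * series_term (Suc n) / 32"
proof -
  have "(\<Sum>k\<le>Suc n. wz_F (Suc n) k) - (\<Sum>k\<le>n. wz_F n k)
      = (\<Sum>k\<le>Suc n. wz_F (Suc n) k - wz_F n k) + wz_F n (Suc n)"
    by (simp add: sum_subtractf)
  also have "\<dots> = wz_G (Suc n) (Suc n) + wz_F n (Suc n)"
    by (simp only: wz_telescope[OF le_refl])
  finally show ?thesis
    using wz_boundary[of n] by (simp add: add.commute)
qed

lemma alternating_series_term_sum: "(\<Sum>k\<le>n. (-1)^k * series_term k) = 32 * (\<Sum>k\<le>n. wz_F n k)"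
proof (induction n)
  case 0
  show ?case by (simp add: series_term_def wz_F_def wz_scale_def binom_term_def)
next
  case (Suc n)
  then show ?case
    using wz_sum_Suc[of n] by (simp add: algebra_simps)
qed

lemma series_term_less_Suc: "series_term k < series_term (Suc k)"
proof -
  define C X where "C = 2*k choose k" and "X = 2*(k+1) choose (k+1)"
  have "(k+1) * C \<le> (k+1) * X"
    using central_binomial_Suc[of k] unfolding C_def X_def by simp
  then have "C \<le> X"
    using Suc_mult_le_cancel1[of k C X] by simp
  have "1 \<le> C" unfolding C_def by (simp add: Suc_le_eq)
  have "C^5 * (205*k^2 + 160*k + 32) \<le> X^5 * (205*k^2 + 160*k + 32)"
    using \<open>C \<le> X\<close> by (simp add: power_mono)
  also have "\<dots> < X^5 * (205*(k+1)^2 + 160*(k+1) + 32)"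
    using \<open>1 \<le> C\<close> \<open>C \<le> X\<close> by (simp add: power2_eq_square)
  finally show ?thesis
    unfolding series_term_def C_def X_def Suc_eq_plus1
    by (metis of_nat_less_iff of_nat_mult of_nat_power)
qed

lemma a_seq_Suc: "a_seq (Suc n) = (\<Sum>k\<le>n. (-1)^(n-k) * series_term k) / (32 * wz_scale n)"
proof -
  have "(of_nat n + 1) * of_nat (2*(n+1) choose (n+1))
      = (2 * (2 * of_nat n + 1) * of_nat (2*n choose n) :: rat)"
    by (rule of_nat_central_binomial_Suc)
  then have "8 * of_nat (Suc n)^2 * of_nat (2 * Suc n choose Suc n)^2 = 32 * wz_scale n"
    unfolding wz_scale_def Suc_eq_plus1
    by (simp only: of_nat_add of_nat_mult of_nat_1 of_nat_numeral) algebra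
  then show ?thesis
    unfolding a_seq_def series_term_def lessThan_Suc_atMost by (simp add: mult.assoc)
qed

lemma a_seq_Suc_eq_of_int: "a_seq (Suc n) = of_int ((-1)^n * (\<Sum>k\<le>n. (-1)^k * int (binom_term n k)))"
proof -
  have "(\<Sum>k\<le>n. (-1)^(n-k) * series_term k) = (-1)^n * (\<Sum>k\<le>n. (-1)^k * series_term k)"
    by (simp add: sum_distrib_left neg_one_power_add_eq_neg_one_power_diff[symmetric]
        power_add mult.assoc)
  also have "\<dots> = 32 * wz_scale n * ((-1)^n * (\<Sum>k\<le>n. (-1)^k * of_nat (binom_term n k)))"
    unfolding alternating_series_term_sum wz_F_def by (simp add: sum_distrib_left algebra_simps)
  finally show ?thesis
    using wz_scale_pos[of n] unfolding a_seq_Suc by simp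
qed

theorem corollary14:
  fixes n :: nat
  assumes "n \<ge> 1"
  shows "\<exists>m::int. m > 0 \<and> a_seq n = of_int m"
proof -
  obtain n' where n: "n = Suc n'"
    using assms by (cases n) auto
  define m where "m = (-1)^n' * (\<Sum>k\<le>n'. (-1)^k * int (binom_term n' k))"
  have "a_seq n = of_int m"
    unfolding n m_def by (rule a_seq_Suc_eq_of_int)
  moreover have "0 < a_seq n"
    unfolding n a_seq_Suc
    using alternating_sum_of_increasing_bounds[of series_term n'] series_term_less_Suc
      wz_scale_pos[of n']
    by (simp add: series_term_def)
  ultimately show ?thesis
    by auto
qed

end
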